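(* Let $(x^k)$ be generated by the augmented Lagrangian method described below, where each step satisfies the inexactness assumption described below with $\varepsilon_k\downarrow0$, and let $\bar x$ be a limit point of $(x^k)$. Assume that one of the following holds: (a) $\bar x$ is feasible for the GNEP and GNEP-CPLD holds in $\bar x$; (b) GNEP-EMFCQ holds in $\bar x$. Then $\bar x$ is a KKT point of the GNEP.
   Context: GNEP: $N$ players, variables $x=(x^1,\ldots,x^N)\in\mathbb{R}^n$, $x^\nu\in\mathbb{R}^{n_\nu}$. Player $\nu$ solves $\min_{x^\nu}\theta_\nu(x)$ s.t. $c^\nu(x):=(g^\nu(x),h^\nu(x))\le0$, with continuously differentiable $\theta_\nu:\mathbb{R}^n\to\mathbb{R}$, $g^\nu:\mathbb{R}^n\to\mathbb{R}^{m_\nu}$, $h^\nu:\mathbb{R}^n\to\mathbb{R}^{p_\nu}$ ($p_\nu=0$ allowed); $m=\sum m_\nu$, $p=\sum p_\nu$. Notation: $v_+=\max\{0,v\}$ componentwise; $\nabla f$ = transposed Jacobian, $\nabla_{x^\nu}f$ its rows for $x^\nu$; $\min$ componentwise; Euclidean norms. Vectors in $\mathbb{R}^m$ (resp. $\mathbb{R}^p$) are split into player blocks. KKT point of the GNEP: $x$ such that for every $\nu$ there are multipliers $\lambda^\nu\in\mathbb{R}^{m_\nu+p_\nu}$ with $\nabla_{x^\nu}\theta_\nu(x)+\nabla_{x^\nu}c^\nu(x)\lambda^\nu=0$ and $\min\{-c^\nu(x),\lambda^\nu\}=0$. Constraint qualifications (with respect to $c^\nu$): vectors are positively linearly dependent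 if a nontrivial nonnegative combination vanishes. CPLD$_\nu$ at $x$ with $c^\nu(x)\le0$: whenever $\nabla_{x^\nu}c_i^\nu(x)$, $i\in I$, are positively linearly dependent for some $I\subset\{i:c_i^\nu(x)=0\}$, the vectors $\nabla_{x^\nu}c_i^\nu(y)$, $i\in I$, are linearly dependent for all $y$ in a neighbourhood of $x$; GNEP-CPLD at $x$ means CPLD$_\nu$ at $x$ for all $\nu$. GNEP-EMFCQ at $x$: for every $\nu$ there is $d^\nu$ with $\nabla_{x^\nu}c_i^\nu(x)^Td^\nu<0$ for every $i$ with $c_i^\nu(x)\ge0$. Augmented Lagrangian of player $\nu$: $L_a^\nu(x,u;\rho)=\theta_\nu(x)+\frac{\rho}{2}\|(g^\nu(x)+u/\rho)_+\|^2$. Method: choose $x^0\in\mathbb{R}^n,\lambda^0\in\mathbb{R}^m,\mu^0\in\mathbb{R}^p$, an initial $u^0\in\mathbb{R}^m$, $u^{\max}\ge0$, and for each $\nu$: $\tau_\nu\in(0,1)$, $\gamma_\nu>1$, $\rho_{\nu,0}>0$. For $k=0,1,2,\dots$ (the method is assumed to run forever): (1) compute $(x^{k+1},\mu^{k+1})\in\mathbb{R}^{n+p}$ satisfying the inexactness assumption; (2) $\lambda^{\nu,k+1}=(u^{\nu,k}+\rho_{\nu,k}g^\nu(x^{k+1}))_+$; (3) for each $\nu$: if $\|\min\{-g^\nu(x^{k+1}),\lambda^{\nu,k+1}\}\|\le\tau_\nu\|\min\{-g^\nu(x^k),\lambda^{\nu,k}\}\|$ then $\rho_{\nu,k+1}=\rho_{\nu,k}$,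 else $\rho_{\nu,k+1}=\gamma_\nu\rho_{\nu,k}$; (4) $u^{k+1}=\min\{\lambda^{k+1},u^{\max}\}$ componentwise. Inexactness assumption: for all $k,\nu$, $\|\nabla_{x^\nu}L_a^\nu(x^{k+1},u^{\nu,k};\rho_{\nu,k})+\nabla_{x^\nu}h^\nu(x^{k+1})\mu^{\nu,k+1}\|\le\varepsilon_k$ and $\|\min\{-h^\nu(x^{k+1}),\mu^{\nu,k+1}\}\|\le\varepsilon_k'$, with $(\varepsilon_k)\subset[0,\infty)$ bounded and $\varepsilon'_k\to0$. *)

theory Defs
  imports "HOL-Analysis.Analysis"
begin

text \<open>Variables x live in real^'n; the finite type 'p indexes the players;
  blk j is the player owning coordinate j, so the blocks x^\<nu> are
  {j. blk j = \<nu>}. Constraint vectors of player \<nu> are functions nat => real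
  with valid indices i < m \<nu> (for g) and i < p \<nu> (for h).\<close>

definition pd :: "(real^'n \<Rightarrow> real) \<Rightarrow> real^'n \<Rightarrow> 'n \<Rightarrow> real" where
  "pd f x j = frechet_derivative f (at x) (axis j 1)"

definition C1 :: "(real^'n \<Rightarrow> real) \<Rightarrow> bool" where
  "C1 f \<longleftrightarrow> (\<forall>x. f differentiable (at x)) \<and> (\<forall>j. continuous_on UNIV (\<lambda>x. pd f x j))"

definition vnorm :: "'a set \<Rightarrow> ('a \<Rightarrow> real) \<Rightarrow> real" where
  "vnorm A v = sqrt (\<Sum>i\<in>A. (v i)\<^sup>2)"

definition pos :: "real \<Rightarrow> real" where "pos t = max 0 t"

definition cc :: "(real^'n \<Rightarrow> nat \<Rightarrow> real) \<Rightarrow> (real^'n \<Rightarrow> nat \<Rightarrow> real) \<Rightarrow> nat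
    \<Rightarrow> real^'n \<Rightarrow> nat \<Rightarrow> real" where
  "cc g h m x i = (if i < m then g x i else h x (i - m))"

definition La :: "(real^'n \<Rightarrow> real) \<Rightarrow> (real^'n \<Rightarrow> nat \<Rightarrow> real) \<Rightarrow> nat
    \<Rightarrow> real^'n \<Rightarrow> (nat \<Rightarrow> real) \<Rightarrow> real \<Rightarrow> real" where
  "La \<theta> g m x u \<rho> = \<theta> x + \<rho> / 2 * (vnorm {..<m} (\<lambda>i. pos (g x i + u i / \<rho>)))\<^sup>2"

definition pos_lin_dep :: "'n set \<Rightarrow> (nat \<Rightarrow> real^'n \<Rightarrow> real) \<Rightarrow> nat set \<Rightarrow> real^'n \<Rightarrow> bool" where
  "pos_lin_dep B F I y \<longleftrightarrow> (\<exists>a. (\<forall>i\<in>I. a i \<ge> 0) \<and> (\<exists>i\<in>I. a i \<noteq> 0) \<and>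
      (\<forall>j\<in>B. (\<Sum>i\<in>I. a i * pd (F i) y j) = 0))"

definition lin_dep :: "'n set \<Rightarrow> (nat \<Rightarrow> real^'n \<Rightarrow> real) \<Rightarrow> nat set \<Rightarrow> real^'n \<Rightarrow> bool" where
  "lin_dep B F I y \<longleftrightarrow> (\<exists>a. (\<exists>i\<in>I. a i \<noteq> 0) \<and>
      (\<forall>j\<in>B. (\<Sum>i\<in>I. a i * pd (F i) y j) = 0))"

text \<open>CPLD for a constraint system F with q components, w.r.t. block B, at x
  (x assumed to satisfy F \<le> 0 where used).\<close>
definition CPLD :: "'n set \<Rightarrow> (nat \<Rightarrow> real^'n \<Rightarrow> real) \<Rightarrow> nat \<Rightarrow> real^'n \<Rightarrow> bool" where
  "CPLD B F q x \<longleftrightarrow> (\<forall>I. I \<subseteq> {i. i < q \<and> F i x = 0} \<longrightarrow> pos_lin_dep B F I x \<longrightarrow>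
      (\<exists>S. open S \<and> x \<in> S \<and> (\<forall>y\<in>S. lin_dep B F I y)))"

end

(* Fix a player and a subsequence of iterates x^(k+1) converging to xbar.  Inexact
   stationarity of the augmented Lagrangian says that these iterates, with the updated
   multipliers lambda^(k+1) and mu^(k+1), form an approximate KKT (AKKT) sequence: the
   gradient of the Lagrangian tends to zero, negative parts of the multipliers vanish, and
   so do the multipliers of constraints inactive at xbar.  For g this holds either because
   the penalty rho stays bounded, so that the complementarity measure decreases
   geometrically, or because rho tends to infinity while the safeguarded estimates u stay
   bounded.

   At a feasible point satisfying CPLD every AKKT point is a KKT point: normalising the
   multipliers yields Fritz John multipliers, and if the one of the objective vanishes,
   CPLD permits a Caratheodory reduction of the active set.  Under EMFCQ the limit is
   feasible, because a violated g-constraint would drive its multiplier to infinity, which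
   the EMFCQ direction rules out; and EMFCQ implies CPLD. *)

theory Submission
  imports Defs
begin

lemma abs_le_vnorm:
  assumes "finite A" "i \<in> A"
  shows "\<bar>v i\<bar> \<le> vnorm A v"
proof -
  have "(v i)\<^sup>2 \<le> (\<Sum>i\<in>A. (v i)\<^sup>2)"
    using assms by (intro member_le_sum) auto
  then show ?thesis
    unfolding vnorm_def by (metis real_sqrt_abs real_sqrt_le_mono)
qed

lemma vnorm_power2: "(vnorm A v)\<^sup>2 = (\<Sum>i\<in>A. (v i)\<^sup>2)"
  unfolding vnorm_def by (simp add: sum_nonneg)

lemma sum_lessThan_add: "(\<Sum>i<a + b. f i) = (\<Sum>i<a. f i) + (\<Sum>i<b. f (a + i :: nat))"
  by (induction b) (simp_all add: add.assoc)

lemma continuous_on_UNIV_tendsto_compose: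
  "continuous_on UNIV f \<Longrightarrow> (X \<longlongrightarrow> l) F \<Longrightarrow> ((\<lambda>k. f (X k)) \<longlongrightarrow> f l) F"
  by (rule continuous_on_tendsto_compose[where s = UNIV]) simp_all

lemma finite_family_convergent_subseq:
  fixes f :: "nat \<Rightarrow> 'a \<Rightarrow> real"
  assumes "finite I" and "\<And>i. i \<in> I \<Longrightarrow> bounded (range (\<lambda>k. f k i))"
  shows "\<exists>r. strict_mono r \<and> (\<forall>i\<in>I. convergent (\<lambda>k. f (r k) i))"
  using assms
proof (induction I rule: finite_induct)
  case empty
  show ?case by (auto intro!: exI[of _ id] simp: strict_mono_def)
next
  case (insert a I)
  then obtain r where r: "strict_mono r" "\<forall>i\<in>I. convergent (\<lambda>k. f (r k) i)" by auto
  have "bounded (range (\<lambda>k. f (r k) a))"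
    by (rule bounded_subset[of "range (\<lambda>k. f k a)"]) (use insert.prems in auto)
  then obtain l r' where r': "strict_mono r'" "((\<lambda>k. f (r k) a) \<circ> r') \<longlonglongrightarrow> l"
    using bounded_imp_convergent_subsequence by blast
  have "convergent (\<lambda>k. f (r (r' k)) i)" if i: "i \<in> I" for i
  proof -
    obtain L where "(\<lambda>k. f (r k) i) \<longlonglongrightarrow> L"
      using r(2) i by (auto simp: convergent_def)
    from LIMSEQ_subseq_LIMSEQ[OF this r'(1)] show ?thesis
      by (auto simp: convergent_def o_def)
  qed
  moreover have "convergent (\<lambda>k. f (r (r' k)) a)"
    using r'(2) by (auto simp: convergent_def o_def)
  ultimately show ?case
    using strict_mono_o[OF r(1) r'(1)] by (intro exI[of _ "r \<circ> r'"]) (auto simp: o_def)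
qed

lemma normalized_multipliers_subseq:
  fixes \<beta> :: "nat \<Rightarrow> 'a \<Rightarrow> real"
  assumes A: "finite A" and \<beta>: "\<And>k i. i \<in> A \<Longrightarrow> \<beta> k i \<ge> 0"
  obtains r \<sigma> c \<gamma> where "strict_mono r" "(\<lambda>k. \<sigma> (r k)) \<longlonglongrightarrow> c"
    "\<And>i. i \<in> A \<Longrightarrow> (\<lambda>k. \<sigma> (r k) * \<beta> (r k) i) \<longlonglongrightarrow> \<gamma> i"
    "c \<ge> 0" "\<And>i. i \<in> A \<Longrightarrow> \<gamma> i \<ge> 0" "c + sum \<gamma> A = 1"
proof -
  define \<sigma> where "\<sigma> k = 1 / (1 + (\<Sum>i\<in>A. \<beta> k i))" for k
  have sum_pos: "1 + (\<Sum>i\<in>A. \<beta> k i) > 0" for k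
    using \<beta> by (simp add: add_pos_nonneg sum_nonneg)
  have \<sigma>_nonneg: "\<sigma> k \<ge> 0" for k
    using sum_pos[of k] by (simp add: \<sigma>_def)
  have unit_sum: "\<sigma> k + (\<Sum>i\<in>A. \<sigma> k * \<beta> k i) = 1" for k
  proof -
    have "\<sigma> k + (\<Sum>i\<in>A. \<sigma> k * \<beta> k i) = \<sigma> k * (1 + (\<Sum>i\<in>A. \<beta> k i))"
      by (simp add: sum_distrib_left algebra_simps)
    then show ?thesis
      using sum_pos[of k] by (simp add: \<sigma>_def)
  qed
  define f where "f k = case_option (\<sigma> k) (\<lambda>i. \<sigma> k * \<beta> k i)" for k
  have f_range: "0 \<le> f k ob \<and> f k ob \<le> 1" if "ob \<in> insert None (Some ` A)" for k ob
  proof -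
    have terms: "0 \<le> \<sigma> k * \<beta> k i" if "i \<in> A" for i
      using \<sigma>_nonneg \<beta> that by simp
    have "\<sigma> k * \<beta> k i \<le> (\<Sum>i\<in>A. \<sigma> k * \<beta> k i)" if "i \<in> A" for i
      using A terms that by (intro member_le_sum) auto
    moreover have "0 \<le> (\<Sum>i\<in>A. \<sigma> k * \<beta> k i)"
      using terms by (simp add: sum_nonneg)
    ultimately show ?thesis
      using that unit_sum[of k] \<sigma>_nonneg[of k] terms by (force simp: f_def)
  qed
  obtain r where r: "strict_mono r" "\<forall>ob\<in>insert None (Some ` A). convergent (\<lambda>k. f (r k) ob)"
    using finite_family_convergent_subseq[of "insert None (Some ` A)" f] A f_range
    by (force simp: bounded_iff intro!: exI[of _ 1])
  define c where "c = lim (\<lambda>k. \<sigma> (r k))"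
  define \<gamma> where "\<gamma> i = lim (\<lambda>k. \<sigma> (r k) * \<beta> (r k) i)" for i
  have c: "(\<lambda>k. \<sigma> (r k)) \<longlonglongrightarrow> c"
    using r(2) unfolding c_def f_def by (simp add: convergent_LIMSEQ_iff)
  have \<gamma>: "(\<lambda>k. \<sigma> (r k) * \<beta> (r k) i) \<longlonglongrightarrow> \<gamma> i" if "i \<in> A" for i
    using r(2) that unfolding \<gamma>_def f_def by (simp add: convergent_LIMSEQ_iff)
  show thesis
  proof
    show "c \<ge> 0"
      by (rule LIMSEQ_le_const[OF c]) (use \<sigma>_nonneg in auto)
    show "\<gamma> i \<ge> 0" if "i \<in> A" for i
      by (rule LIMSEQ_le_const[OF \<gamma>[OF that]]) (use \<sigma>_nonneg \<beta> that in auto)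
    have "(\<lambda>k. \<sigma> (r k) + (\<Sum>i\<in>A. \<sigma> (r k) * \<beta> (r k) i)) \<longlonglongrightarrow> c + sum \<gamma> A"
      by (intro tendsto_add c tendsto_sum \<gamma>)
    then show "c + sum \<gamma> A = 1"
      using unit_sum by (simp add: LIMSEQ_const_iff)
  qed (use r c \<gamma> in auto)
qed

lemma finite_bex_forall_pos:
  fixes Q :: "'a \<Rightarrow> real \<Rightarrow> bool"
  assumes A: "finite A" and ex: "\<And>e. e > 0 \<Longrightarrow> \<exists>i\<in>A. Q i e"
    and mono: "\<And>i e e'. Q i e \<Longrightarrow> e \<le> e' \<Longrightarrow> Q i e'"
  shows "\<exists>i\<in>A. \<forall>e>0. Q i e"
proof (rule ccontr)
  assume "\<not> ?thesis"
  then obtain E where E: "\<And>i. i \<in> A \<Longrightarrow> E i > 0 \<and> \<not> Q i (E i)"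
    by metis
  have "A \<noteq> {}"
    using ex[of 1] by auto
  then have "Min (E ` A) > 0"
    using A E by auto
  then obtain i where "i \<in> A" "Q i (Min (E ` A))"
    using ex by blast
  moreover have "Min (E ` A) \<le> E i"
    using A \<open>i \<in> A\<close> by simp
  ultimately show False
    using E mono by blast
qed

lemma nonneg_combination_drop_index:
  fixes b a :: "'a \<Rightarrow> real" and X :: "'a \<Rightarrow> 'b \<Rightarrow> real"
  assumes A: "finite A" and b: "\<And>i. b i \<ge> 0" and a_pos: "\<exists>i\<in>A. a i > 0"
    and rel: "\<And>j. j \<in> B \<Longrightarrow> (\<Sum>i\<in>A. a i * X i j) = 0"
  shows "\<exists>i0\<in>A. \<exists>b'. (\<forall>i. b' i \<ge> 0) \<and>
    (\<forall>j\<in>B. (\<Sum>i\<in>A - {i0}. b' i * X i j) = (\<Sum>i\<in>A. b i * X i j))"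
proof -
  define Ap where "Ap = {i\<in>A. a i > 0}"
  have "finite Ap" "Ap \<noteq> {}"
    using A a_pos by (auto simp: Ap_def)
  define t where "t = Min ((\<lambda>i. b i / a i) ` Ap)"
  have "t \<in> (\<lambda>i. b i / a i) ` Ap"
    unfolding t_def using \<open>finite Ap\<close> \<open>Ap \<noteq> {}\<close> by (intro Min_in) auto
  then obtain i0 where i0: "i0 \<in> Ap" "t = b i0 / a i0"
    by blast
  have t_nonneg: "t \<ge> 0"
    using i0 b by (auto simp: Ap_def)
  have shifted_nonneg: "t * a i \<le> b i" if "i \<in> A" for i
  proof (cases "a i > 0")
    case True
    then have "t \<le> b i / a i"
      using \<open>finite Ap\<close> that by (auto simp: t_def Ap_def)
    then show ?thesis
      using True by (simp add: field_simps)
  next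
    case False
    then show ?thesis
      using t_nonneg b[of i] mult_nonneg_nonpos[of t "a i"] by linarith
  qed
  define b' where "b' i = max 0 (b i - t * a i)" for i
  have b'_eq: "b' i = b i - t * a i" if "i \<in> A" for i
    using shifted_nonneg[OF that] by (simp add: b'_def)
  have i0_A: "i0 \<in> A" and b_i0: "b i0 - t * a i0 = 0"
    using i0 by (auto simp: Ap_def)
  show ?thesis
  proof (intro bexI[OF _ i0_A] exI[of _ b'] conjI allI ballI)
    show "b' i \<ge> 0" for i
      by (simp add: b'_def)
    fix j assume j: "j \<in> B"
    have "(\<Sum>i\<in>A - {i0}. b' i * X i j) = (\<Sum>i\<in>A - {i0}. (b i - t * a i) * X i j)"
      by (rule sum.cong) (auto simp: b'_eq)
    also have "\<dots> = (\<Sum>i\<in>A. (b i - t * a i) * X i j)"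
      using sum.remove[OF A i0_A, of "\<lambda>i. (b i - t * a i) * X i j"] b_i0 by simp
    also have "\<dots> = (\<Sum>i\<in>A. b i * X i j) - t * (\<Sum>i\<in>A. a i * X i j)"
      by (simp add: left_diff_distrib sum_subtractf sum_distrib_left mult.assoc)
    finally show "(\<Sum>i\<in>A - {i0}. b' i * X i j) = (\<Sum>i\<in>A. b i * X i j)"
      using rel[OF j] by simp
  qed
qed

lemma lin_dep_imp_pos_coeff:
  assumes "lin_dep B F A y"
  obtains a where "\<exists>i\<in>A. a i > 0" "\<And>j. j \<in> B \<Longrightarrow> (\<Sum>i\<in>A. a i * pd (F i) y j) = 0"
proof -
  obtain a i where a: "i \<in> A" "a i \<noteq> 0" "\<And>j. j \<in> B \<Longrightarrow> (\<Sum>i\<in>A. a i * pd (F i) y j) = 0"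
    using assms unfolding lin_dep_def by blast
  show thesis
  proof (cases "a i > 0")
    case True
    then show thesis
      using that a by blast
  next
    case False
    have "(\<Sum>i\<in>A. - a i * pd (F i) y j) = 0" if "j \<in> B" for j
      using a(3)[OF that] by (simp add: sum_negf)
    then show thesis
      using that[of "\<lambda>i. - a i"] a(1,2) False by force
  qed
qed

section \<open>Approximate KKT points under CPLD\<close>

definition approx_KKT :: "(real^'n \<Rightarrow> real) \<Rightarrow> (nat \<Rightarrow> real^'n \<Rightarrow> real) \<Rightarrow> 'n set \<Rightarrow> real^'n
    \<Rightarrow> nat set \<Rightarrow> real \<Rightarrow> bool" where
  "approx_KKT T F B x A e \<longleftrightarrow> (\<exists>z \<beta>. dist z x < e \<and> (\<forall>i. \<beta> i \<ge> 0) \<and>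
      (\<forall>j\<in>B. \<bar>pd T z j + (\<Sum>i\<in>A. \<beta> i * pd (F i) z j)\<bar> < e))"

lemma approx_KKT_mono: "approx_KKT T F B x A e \<Longrightarrow> e \<le> e' \<Longrightarrow> approx_KKT T F B x A e'"
  unfolding approx_KKT_def by (meson less_le_trans)

lemma approx_KKT_Diff_singleton:
  assumes A: "finite A" and S: "open S" "x \<in> S" and dep: "\<And>y. y \<in> S \<Longrightarrow> lin_dep B F A y"
    and apx: "\<forall>e>0. approx_KKT T F B x A e"
  shows "\<exists>i\<in>A. \<forall>e>0. approx_KKT T F B x (A - {i}) e"
proof (rule finite_bex_forall_pos[OF A _ approx_KKT_mono])
  obtain \<delta> where \<delta>: "\<delta> > 0" "ball x \<delta> \<subseteq> S"
    using S open_contains_ball by blast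
  fix e :: real assume "e > 0"
  then have "approx_KKT T F B x A (min e \<delta>)"
    using apx \<delta>(1) by simp
  then obtain z \<beta> where z: "dist z x < min e \<delta>" "\<And>i. \<beta> i \<ge> 0"
    "\<And>j. j \<in> B \<Longrightarrow> \<bar>pd T z j + (\<Sum>i\<in>A. \<beta> i * pd (F i) z j)\<bar> < min e \<delta>"
    unfolding approx_KKT_def by auto
  have "z \<in> S"
    using z(1) \<delta>(2) by (auto simp: dist_commute)
  then obtain a where a: "\<exists>i\<in>A. a i > 0" "\<And>j. j \<in> B \<Longrightarrow> (\<Sum>i\<in>A. a i * pd (F i) z j) = 0"
    using dep lin_dep_imp_pos_coeff by blast
  obtain i0 \<beta>' where drop: "i0 \<in> A" "\<forall>i. \<beta>' i \<ge> 0"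
    "\<forall>j\<in>B. (\<Sum>i\<in>A - {i0}. \<beta>' i * pd (F i) z j) = (\<Sum>i\<in>A. \<beta> i * pd (F i) z j)"
    using nonneg_combination_drop_index[where b = \<beta> and B = B and X = "\<lambda>i j. pd (F i) z j",
        OF A z(2) a]
    by blast
  show "\<exists>i\<in>A. approx_KKT T F B x (A - {i}) e"
    using drop z unfolding approx_KKT_def
    by (intro bexI[of _ i0]) (auto intro!: exI[of _ z] exI[of _ \<beta>'])
qed

lemma approx_KKT_sequenceE:
  assumes apx: "\<forall>e>0. approx_KKT T F B x A e"
  obtains z \<beta> where "z \<longlonglongrightarrow> x" "\<And>k i. \<beta> k i \<ge> 0"
    "\<And>j. j \<in> B \<Longrightarrow> (\<lambda>k. pd T (z k) j + (\<Sum>i\<in>A. \<beta> k i * pd (F i) (z k) j)) \<longlonglongrightarrow> 0"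
proof -
  define e :: "nat \<Rightarrow> real" where "e k = 1 / real (Suc k)" for k
  have "\<forall>k. \<exists>z \<beta>. dist z x < e k \<and> (\<forall>i. \<beta> i \<ge> 0) \<and>
      (\<forall>j\<in>B. \<bar>pd T z j + (\<Sum>i\<in>A. \<beta> i * pd (F i) z j)\<bar> < e k)"
    using apx unfolding approx_KKT_def e_def by simp
  then have "\<exists>z \<beta>. \<forall>k. dist (z k) x < e k \<and> (\<forall>i. \<beta> k i \<ge> 0) \<and>
      (\<forall>j\<in>B. \<bar>pd T (z k) j + (\<Sum>i\<in>A. \<beta> k i * pd (F i) (z k) j)\<bar> < e k)"
    by (simp only: choice_iff)
  then obtain z \<beta> where z: "\<And>k. dist (z k) x < e k" and \<beta>: "\<And>k i. \<beta> k i \<ge> 0"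
    and res: "\<And>k j. j \<in> B \<Longrightarrow> \<bar>pd T (z k) j + (\<Sum>i\<in>A. \<beta> k i * pd (F i) (z k) j)\<bar> < e k"
    by blast
  have e: "e \<longlonglongrightarrow> 0"
    unfolding e_def using LIMSEQ_inverse_real_of_nat by (simp add: inverse_eq_divide)
  show thesis
  proof (rule that[OF _ \<beta>])
    have "(\<lambda>k. dist (z k) x) \<longlonglongrightarrow> 0"
      by (rule Lim_null_comparison[OF _ e]) (simp add: less_imp_le z)
    then show "z \<longlonglongrightarrow> x"
      using tendsto_dist_iff by blast
    show "(\<lambda>k. pd T (z k) j + (\<Sum>i\<in>A. \<beta> k i * pd (F i) (z k) j)) \<longlonglongrightarrow> 0" if "j \<in> B" for j
      by (rule Lim_null_comparison[OF _ e]) (simp add: less_imp_le res[OF that])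
  qed
qed

lemma approx_KKT_imp_Fritz_John:
  assumes cont_T: "\<And>j. continuous_on UNIV (\<lambda>x. pd T x j)"
    and cont_F: "\<And>i j. i \<in> A \<Longrightarrow> continuous_on UNIV (\<lambda>x. pd (F i) x j)"
    and A: "finite A" and apx: "\<forall>e>0. approx_KKT T F B x A e"
  obtains c \<gamma> where "c \<ge> 0" "\<And>i. i \<in> A \<Longrightarrow> \<gamma> i \<ge> 0" "c + sum \<gamma> A = 1"
    "\<And>j. j \<in> B \<Longrightarrow> c * pd T x j + (\<Sum>i\<in>A. \<gamma> i * pd (F i) x j) = 0"
proof -
  obtain z \<beta> where z: "z \<longlonglongrightarrow> x" and \<beta>: "\<And>k i. \<beta> k i \<ge> 0"
    and res: "\<And>j. j \<in> B \<Longrightarrow> (\<lambda>k. pd T (z k) j + (\<Sum>i\<in>A. \<beta> k i * pd (F i) (z k) j)) \<longlonglongrightarrow> 0"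
    by (rule approx_KKT_sequenceE[OF apx]) (rule that)
  obtain r \<sigma> c \<gamma> where r: "strict_mono r" and c: "(\<lambda>k. \<sigma> (r k)) \<longlonglongrightarrow> c"
    and \<gamma>: "\<And>i. i \<in> A \<Longrightarrow> (\<lambda>k. \<sigma> (r k) * \<beta> (r k) i) \<longlonglongrightarrow> \<gamma> i"
    and signs: "c \<ge> 0" "\<And>i. i \<in> A \<Longrightarrow> \<gamma> i \<ge> 0" "c + sum \<gamma> A = 1"
    by (rule normalized_multipliers_subseq[where \<beta> = \<beta>, OF A \<beta>]) (rule that)
  have zr: "(\<lambda>k. z (r k)) \<longlonglongrightarrow> x"
    using LIMSEQ_subseq_LIMSEQ[OF z r] by (simp add: o_def)
  show thesis
  proof (rule that[OF signs])
    fix j assume j: "j \<in> B"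
    have "(\<lambda>k. \<sigma> (r k) * pd T (z (r k)) j + (\<Sum>i\<in>A. (\<sigma> (r k) * \<beta> (r k) i) * pd (F i) (z (r k)) j))
        \<longlonglongrightarrow> c * pd T x j + (\<Sum>i\<in>A. \<gamma> i * pd (F i) x j)"
      using cont_T cont_F
      by (intro tendsto_intros c \<gamma> continuous_on_UNIV_tendsto_compose[OF _ zr]) auto
    moreover have "(\<lambda>k. \<sigma> (r k) * (pd T (z (r k)) j + (\<Sum>i\<in>A. \<beta> (r k) i * pd (F i) (z (r k)) j)))
        \<longlonglongrightarrow> c * 0"
      using LIMSEQ_subseq_LIMSEQ[OF res[OF j] r] by (intro tendsto_mult c) (simp add: o_def)
    ultimately show "c * pd T x j + (\<Sum>i\<in>A. \<gamma> i * pd (F i) x j) = 0"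
      by (simp add: LIMSEQ_unique distrib_left sum_distrib_left mult.assoc)
  qed
qed

definition KKT_point :: "(real^'n \<Rightarrow> real) \<Rightarrow> (nat \<Rightarrow> real^'n \<Rightarrow> real) \<Rightarrow> 'n set \<Rightarrow> nat
    \<Rightarrow> real^'n \<Rightarrow> bool" where
  "KKT_point T F B q x \<longleftrightarrow> (\<exists>mult. (\<forall>j\<in>B. pd T x j + (\<Sum>i<q. mult i * pd (F i) x j) = 0) \<and>
      (\<forall>i<q. min (- F i x) (mult i) = 0))"

lemma KKT_pointI_active:
  assumes feas: "\<And>i. i < q \<Longrightarrow> F i x \<le> 0" and A: "A \<subseteq> {i. i < q \<and> F i x = 0}"
    and \<beta>: "\<And>i. i \<in> A \<Longrightarrow> \<beta> i \<ge> 0"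
    and stat: "\<And>j. j \<in> B \<Longrightarrow> pd T x j + (\<Sum>i\<in>A. \<beta> i * pd (F i) x j) = 0"
  shows "KKT_point T F B q x"
  unfolding KKT_point_def
proof (intro exI[of _ "\<lambda>i. if i \<in> A then \<beta> i else 0"] conjI allI impI ballI)
  fix j assume "j \<in> B"
  have "(\<Sum>i<q. (if i \<in> A then \<beta> i else 0) * pd (F i) x j) = (\<Sum>i\<in>A. \<beta> i * pd (F i) x j)"
    using A by (intro sum.mono_neutral_cong_right) auto
  then show "pd T x j + (\<Sum>i<q. (if i \<in> A then \<beta> i else 0) * pd (F i) x j) = 0"
    using stat[OF \<open>j \<in> B\<close>] by simp
next
  fix i assume "i < q"
  then show "min (- F i x) (if i \<in> A then \<beta> i else 0) = 0"
    using feas[OF \<open>i < q\<close>] A \<beta> by (auto simp: min_def)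
qed

text \<open>Induction on the support A: if the Fritz John multiplier of the objective vanishes,
  the gradients indexed by A are positively dependent at x, hence by CPLD dependent near x,
  and a Caratheodory step removes one index from A.\<close>

lemma CPLD_approx_KKT_imp_KKT_point:
  assumes cont_T: "\<And>j. continuous_on UNIV (\<lambda>x. pd T x j)"
    and cont_F: "\<And>i j. i < q \<Longrightarrow> continuous_on UNIV (\<lambda>x. pd (F i) x j)"
    and feas: "\<And>i. i < q \<Longrightarrow> F i x \<le> 0" and cpld: "CPLD B F q x"
  shows "A \<subseteq> {i. i < q \<and> F i x = 0} \<Longrightarrow> (\<forall>e>0. approx_KKT T F B x A e) \<Longrightarrow>
    KKT_point T F B q x"
proof (induction "card A" arbitrary: A rule: less_induct)
  case less
  have A: "finite A"
    using less.prems(1) finite_subset[of A "{..<q}"] by auto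
  have cont_FA: "continuous_on UNIV (\<lambda>x. pd (F i) x j)" if "i \<in> A" for i j
    using cont_F less.prems(1) that by auto
  obtain c \<gamma> where c: "c \<ge> 0" and \<gamma>: "\<And>i. i \<in> A \<Longrightarrow> \<gamma> i \<ge> 0" "c + sum \<gamma> A = 1"
    and FJ: "\<And>j. j \<in> B \<Longrightarrow> c * pd T x j + (\<Sum>i\<in>A. \<gamma> i * pd (F i) x j) = 0"
    using approx_KKT_imp_Fritz_John[OF cont_T cont_FA A less.prems(2)] by blast
  show ?case
  proof (cases "c = 0")
    case False
    have "pd T x j + (\<Sum>i\<in>A. \<gamma> i / c * pd (F i) x j) = 0" if "j \<in> B" for j
      using FJ[OF that] False
      by (simp add: field_simps sum_divide_distrib[symmetric])
    then show ?thesis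
      using \<gamma>(1) c feas less.prems(1)
      by (intro KKT_pointI_active[where A = A and \<beta> = "\<lambda>i. \<gamma> i / c"]) auto
  next
    case True
    have "\<exists>i\<in>A. \<gamma> i \<noteq> 0"
      using \<gamma>(2) True sum.neutral[of A \<gamma>] by fastforce
    then have "pos_lin_dep B F A x"
      using \<gamma>(1) FJ True unfolding pos_lin_dep_def by (intro exI[of _ \<gamma>]) auto
    then have "\<exists>S. open S \<and> x \<in> S \<and> (\<forall>y\<in>S. lin_dep B F A y)"
      using cpld less.prems(1) unfolding CPLD_def by blast
    then obtain S where S: "open S" "x \<in> S" "\<And>y. y \<in> S \<Longrightarrow> lin_dep B F A y"
      by blast
    obtain i where i: "i \<in> A" "\<forall>e>0. approx_KKT T F B x (A - {i}) e"
      using approx_KKT_Diff_singleton[OF A S less.prems(2)] by blast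
    have "A - {i} \<subseteq> {i. i < q \<and> F i x = 0}"
      using less.prems(1) by auto
    from less.hyps[OF card_Diff1_less[OF A i(1)] this i(2)] show ?thesis .
  qed
qed

lemma sequence_imp_approx_KKT:
  assumes z: "z \<longlonglongrightarrow> x" and \<beta>: "\<And>k i. \<beta> k i \<ge> 0"
    and res: "\<And>j. j \<in> B \<Longrightarrow> (\<lambda>k. pd T (z k) j + (\<Sum>i\<in>A. \<beta> k i * pd (F i) (z k) j)) \<longlonglongrightarrow> 0"
  shows "\<forall>e>0. approx_KKT T F B x A e"
proof (intro allI impI)
  fix e :: real assume "e > 0"
  have "\<forall>\<^sub>F k in sequentially. dist (z k) x < e"
    using z \<open>e > 0\<close> by (rule tendstoD)
  moreover have "\<forall>\<^sub>F k in sequentially. \<forall>j\<in>B. \<bar>pd T (z k) j + (\<Sum>i\<in>A. \<beta> k i * pd (F i) (z k) j)\<bar> < e"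
    using tendstoD[OF res \<open>e > 0\<close>] by (intro eventually_ball_finite) auto
  ultimately obtain k where "dist (z k) x < e"
    "\<forall>j\<in>B. \<bar>pd T (z k) j + (\<Sum>i\<in>A. \<beta> k i * pd (F i) (z k) j)\<bar> < e"
    using eventually_happens'[OF trivial_limit_sequentially] eventually_conj by blast
  then show "approx_KKT T F B x A e"
    using \<beta> unfolding approx_KKT_def by blast
qed

definition AKKT_sequence :: "(real^'n \<Rightarrow> real) \<Rightarrow> (nat \<Rightarrow> real^'n \<Rightarrow> real) \<Rightarrow> 'n set \<Rightarrow> nat
    \<Rightarrow> real^'n \<Rightarrow> (nat \<Rightarrow> real^'n) \<Rightarrow> (nat \<Rightarrow> nat \<Rightarrow> real) \<Rightarrow> bool" where
  "AKKT_sequence T F B q x y \<alpha> \<longleftrightarrow> y \<longlonglongrightarrow> x \<and>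
     (\<forall>j\<in>B. (\<lambda>k. pd T (y k) j + (\<Sum>i<q. \<alpha> k i * pd (F i) (y k) j)) \<longlonglongrightarrow> 0) \<and>
     (\<forall>i<q. F i x < 0 \<longrightarrow> (\<lambda>k. \<alpha> k i) \<longlonglongrightarrow> 0) \<and>
     (\<forall>i<q. (\<lambda>k. min 0 (\<alpha> k i)) \<longlonglongrightarrow> 0)"

lemma AKKT_sequence_imp_approx_KKT:
  assumes cont_F: "\<And>i j. i < q \<Longrightarrow> continuous_on UNIV (\<lambda>x. pd (F i) x j)"
    and akkt: "AKKT_sequence T F B q x y \<alpha>" and feas: "\<And>i. i < q \<Longrightarrow> F i x \<le> 0"
  shows "\<forall>e>0. approx_KKT T F B x {i. i < q \<and> F i x = 0} e"
proof (rule sequence_imp_approx_KKT)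
  define A where "A = {i. i < q \<and> F i x = 0}"
  have A: "A \<subseteq> {..<q}"
    by (auto simp: A_def)
  show y: "y \<longlonglongrightarrow> x"
    using akkt by (simp add: AKKT_sequence_def)
  show "max 0 (\<alpha> k i) \<ge> 0" for k i
    by simp
  have F_lim: "(\<lambda>k. pd (F i) (y k) j) \<longlonglongrightarrow> pd (F i) x j" if "i < q" for i j
    using cont_F[OF that] y by (rule continuous_on_UNIV_tendsto_compose)
  fix j assume "j \<in> B"
  define X where "X k i = pd (F i) (y k) j" for k i
  have "(\<lambda>k. pd T (y k) j + (\<Sum>i\<in>A. max 0 (\<alpha> k i) * X k i))
      = (\<lambda>k. (pd T (y k) j + (\<Sum>i<q. \<alpha> k i * X k i))
        - (\<Sum>i\<in>{..<q} - A. \<alpha> k i * X k i) - (\<Sum>i\<in>A. min 0 (\<alpha> k i) * X k i))"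
  proof
    fix k
    have "\<alpha> k i * X k i = max 0 (\<alpha> k i) * X k i + min 0 (\<alpha> k i) * X k i" for i
      by (simp add: max_def min_def distrib_right[symmetric])
    then show "pd T (y k) j + (\<Sum>i\<in>A. max 0 (\<alpha> k i) * X k i)
      = (pd T (y k) j + (\<Sum>i<q. \<alpha> k i * X k i))
        - (\<Sum>i\<in>{..<q} - A. \<alpha> k i * X k i) - (\<Sum>i\<in>A. min 0 (\<alpha> k i) * X k i)"
      using sum.subset_diff[OF A, of "\<lambda>i. \<alpha> k i * X k i"] by (simp add: sum.distrib)
  qed
  also have "\<dots> \<longlonglongrightarrow> 0 - (\<Sum>i\<in>{..<q} - A. 0 * pd (F i) x j) - (\<Sum>i\<in>A. 0 * pd (F i) x j)"
  proof (intro tendsto_diff tendsto_sum tendsto_mult)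
    show "(\<lambda>k. pd T (y k) j + (\<Sum>i<q. \<alpha> k i * X k i)) \<longlonglongrightarrow> 0"
      using akkt \<open>j \<in> B\<close> by (simp add: AKKT_sequence_def X_def)
    show "(\<lambda>k. \<alpha> k i) \<longlonglongrightarrow> 0" if "i \<in> {..<q} - A" for i
      using akkt feas[of i] that by (force simp: AKKT_sequence_def A_def)
    show "(\<lambda>k. min 0 (\<alpha> k i)) \<longlonglongrightarrow> 0" if "i \<in> A" for i
      using akkt that by (simp add: AKKT_sequence_def A_def)
    show "(\<lambda>k. X k i) \<longlonglongrightarrow> pd (F i) x j" if "i \<in> {..<q} - A" for i
      using F_lim that unfolding X_def by blast
    show "(\<lambda>k. X k i) \<longlonglongrightarrow> pd (F i) x j" if "i \<in> A" for i
      using F_lim that A unfolding X_def by blast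
  qed
  finally show "(\<lambda>k. pd T (y k) j + (\<Sum>i\<in>A. max 0 (\<alpha> k i) * pd (F i) (y k) j)) \<longlonglongrightarrow> 0"
    by (simp add: X_def)
qed

theorem AKKT_sequence_CPLD_imp_KKT_point:
  assumes cont_T: "\<And>j. continuous_on UNIV (\<lambda>x. pd T x j)"
    and cont_F: "\<And>i j. i < q \<Longrightarrow> continuous_on UNIV (\<lambda>x. pd (F i) x j)"
    and akkt: "AKKT_sequence T F B q x y \<alpha>" and feas: "\<And>i. i < q \<Longrightarrow> F i x \<le> 0"
    and cpld: "CPLD B F q x"
  shows "KKT_point T F B q x"
  using CPLD_approx_KKT_imp_KKT_point[OF cont_T cont_F feas cpld subset_refl]
    AKKT_sequence_imp_approx_KKT[OF cont_F akkt feas] by blast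

section \<open>EMFCQ\<close>

definition EMFCQ_direction :: "'n set \<Rightarrow> (nat \<Rightarrow> real^'n \<Rightarrow> real) \<Rightarrow> nat \<Rightarrow> real^'n
    \<Rightarrow> ('n \<Rightarrow> real) \<Rightarrow> bool" where
  "EMFCQ_direction B F q x d \<longleftrightarrow> (\<forall>i<q. F i x \<ge> 0 \<longrightarrow> (\<Sum>j\<in>B. pd (F i) x j * d j) < 0)"

text \<open>CPLD holds vacuously: pairing a nonnegative dependence of active gradients with the
  EMFCQ direction would give a negative zero.\<close>

lemma EMFCQ_imp_CPLD:
  assumes d: "EMFCQ_direction B F q x d"
  shows "CPLD B F q x"
  unfolding CPLD_def
proof (intro allI impI)
  fix I assume I: "I \<subseteq> {i. i < q \<and> F i x = 0}" and "pos_lin_dep B F I x"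
  then obtain a i0 where a: "\<forall>i\<in>I. a i \<ge> 0" "i0 \<in> I" "a i0 \<noteq> 0"
    "\<forall>j\<in>B. (\<Sum>i\<in>I. a i * pd (F i) x j) = 0"
    unfolding pos_lin_dep_def by blast
  have I_fin: "finite I"
    using I finite_subset[of I "{..<q}"] by auto
  define D where "D i = (\<Sum>j\<in>B. pd (F i) x j * d j)" for i
  have D_neg: "D i < 0" if "i \<in> I" for i
    using d I that unfolding D_def EMFCQ_direction_def by force
  have "0 = (\<Sum>j\<in>B. (\<Sum>i\<in>I. a i * pd (F i) x j) * d j)"
    using a(4) by simp
  also have "\<dots> = (\<Sum>i\<in>I. a i * D i)"
    unfolding D_def by (simp add: sum_distrib_right sum_distrib_left sum.swap[of _ B] mult.assoc)
  also have "\<dots> = a i0 * D i0 + (\<Sum>i\<in>I - {i0}. a i * D i)"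
    using sum.remove[OF I_fin a(2)] by simp
  also have "\<dots> < 0"
  proof (rule add_neg_nonpos)
    have "a i0 > 0"
      using a by force
    then show "a i0 * D i0 < 0"
      using D_neg[OF a(2)] by (simp add: mult_pos_neg)
    show "(\<Sum>i\<in>I - {i0}. a i * D i) \<le> 0"
      using a(1) D_neg by (intro sum_nonpos) (simp add: mult_nonneg_nonpos less_imp_le)
  qed
  finally show "\<exists>S. open S \<and> x \<in> S \<and> (\<forall>y\<in>S. lin_dep B F I y)"
    by simp
qed

lemma AKKT_sequence_directional_limit:
  assumes cont_T: "\<And>j. continuous_on UNIV (\<lambda>x. pd T x j)"
    and akkt: "AKKT_sequence T F B q x y \<alpha>"
  shows "(\<lambda>k. \<Sum>i<q. \<alpha> k i * (\<Sum>j\<in>B. pd (F i) (y k) j * d j)) \<longlonglongrightarrow> - (\<Sum>j\<in>B. pd T x j * d j)"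
proof -
  have y: "y \<longlonglongrightarrow> x"
    using akkt by (simp add: AKKT_sequence_def)
  have "(\<lambda>k. (\<Sum>j\<in>B. (pd T (y k) j + (\<Sum>i<q. \<alpha> k i * pd (F i) (y k) j)) * d j)
      - (\<Sum>j\<in>B. pd T (y k) j * d j)) \<longlonglongrightarrow> (\<Sum>j\<in>B. 0 * d j) - (\<Sum>j\<in>B. pd T x j * d j)"
    using akkt cont_T unfolding AKKT_sequence_def
    by (intro tendsto_intros continuous_on_UNIV_tendsto_compose[OF _ y]) auto
  moreover have "(\<Sum>j\<in>B. (pd T (y k) j + (\<Sum>i<q. \<alpha> k i * pd (F i) (y k) j)) * d j)
      - (\<Sum>j\<in>B. pd T (y k) j * d j) = (\<Sum>i<q. \<alpha> k i * (\<Sum>j\<in>B. pd (F i) (y k) j * d j))" for k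
    by (simp add: distrib_right sum.distrib sum_distrib_right sum_distrib_left
        sum.swap[of _ B] mult.assoc)
  ultimately show ?thesis
    by simp
qed

lemma AKKT_sequence_EMFCQ_term_bound:
  assumes cont_F: "\<And>j. continuous_on UNIV (\<lambda>x. pd (F i) x j)"
    and akkt: "AKKT_sequence T F B q x y \<alpha>" and d: "EMFCQ_direction B F q x d" and i: "i < q"
  shows "\<exists>w. w \<longlonglongrightarrow> 0 \<and>
    (\<forall>\<^sub>F k in sequentially. \<alpha> k i * (\<Sum>j\<in>B. pd (F i) (y k) j * d j) \<le> w k)"
proof -
  define D where "D z = (\<Sum>j\<in>B. pd (F i) z j * d j)" for z
  have y: "y \<longlonglongrightarrow> x"
    using akkt by (simp add: AKKT_sequence_def)
  have D_lim: "(\<lambda>k. D (y k)) \<longlonglongrightarrow> D x"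
    unfolding D_def using cont_F
    by (intro tendsto_intros continuous_on_UNIV_tendsto_compose[OF _ y])
  show ?thesis
  proof (cases "F i x < 0")
    case True
    then have "(\<lambda>k. \<alpha> k i * D (y k)) \<longlonglongrightarrow> 0 * D x"
      using akkt i by (intro tendsto_mult D_lim) (simp add: AKKT_sequence_def)
    then show ?thesis
      unfolding D_def by (intro exI[of _ "\<lambda>k. \<alpha> k i * D (y k)"]) (simp add: D_def)
  next
    case False
    then have "\<forall>\<^sub>F k in sequentially. D (y k) < 0"
      using d i D_lim by (intro order_tendstoD(2)) (auto simp: EMFCQ_direction_def D_def)
    then have "\<forall>\<^sub>F k in sequentially. \<alpha> k i * D (y k) \<le> min 0 (\<alpha> k i) * D (y k)"
      by eventually_elim (auto simp: min_def mult_right_mono_neg)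
    moreover have "(\<lambda>k. min 0 (\<alpha> k i) * D (y k)) \<longlonglongrightarrow> 0 * D x"
      using akkt i by (intro tendsto_mult D_lim) (simp add: AKKT_sequence_def)
    ultimately show ?thesis
      unfolding D_def by (intro exI[of _ "\<lambda>k. min 0 (\<alpha> k i) * D (y k)"]) (simp add: D_def)
  qed
qed

text \<open>In the direction d the term of constraint i0 tends to minus infinity, while every
  other term is eventually bounded above by a null sequence; but the sum of all terms
  converges.\<close>

lemma AKKT_sequence_EMFCQ_not_tendsto_at_top:
  assumes cont_T: "\<And>j. continuous_on UNIV (\<lambda>x. pd T x j)"
    and cont_F: "\<And>i j. i < q \<Longrightarrow> continuous_on UNIV (\<lambda>x. pd (F i) x j)"
    and akkt: "AKKT_sequence T F B q x y \<alpha>" and d: "EMFCQ_direction B F q x d"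
    and i0: "i0 < q" "F i0 x \<ge> 0"
  shows "\<not> filterlim (\<lambda>k. \<alpha> k i0) at_top sequentially"
proof
  assume \<alpha>_i0: "filterlim (\<lambda>k. \<alpha> k i0) at_top sequentially"
  define D where "D i z = (\<Sum>j\<in>B. pd (F i) z j * d j)" for i z
  define I where "I = {..<q} - {i0}"
  have "\<forall>i\<in>I. \<exists>w. w \<longlonglongrightarrow> 0 \<and> (\<forall>\<^sub>F k in sequentially. \<alpha> k i * D i (y k) \<le> w k)"
  proof
    fix i assume "i \<in> I"
    then have "i < q"
      by (simp add: I_def)
    with cont_F show "\<exists>w. w \<longlonglongrightarrow> 0 \<and> (\<forall>\<^sub>F k in sequentially. \<alpha> k i * D i (y k) \<le> w k)"
      unfolding D_def by (intro AKKT_sequence_EMFCQ_term_bound[OF _ akkt d])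
  qed
  from bchoice[OF this] obtain w where w: "\<forall>i\<in>I. w i \<longlonglongrightarrow> 0 \<and>
      (\<forall>\<^sub>F k in sequentially. \<alpha> k i * D i (y k) \<le> w i k)" ..
  then have w_bound: "\<forall>\<^sub>F k in sequentially. \<forall>i\<in>I. \<alpha> k i * D i (y k) \<le> w i k"
    by (intro eventually_ball_finite) (auto simp: I_def)
  have y: "y \<longlonglongrightarrow> x"
    using akkt by (simp add: AKKT_sequence_def)
  have D_i0: "(\<lambda>k. - D i0 (y k)) \<longlonglongrightarrow> - D i0 x"
    unfolding D_def using cont_F[OF i0(1)]
    by (intro tendsto_intros continuous_on_UNIV_tendsto_compose[OF _ y])
  have "- D i0 x > 0"
    using d i0 by (simp add: EMFCQ_direction_def D_def)
  have "\<forall>\<^sub>F k in sequentially. - (\<Sum>i\<in>I. w i k) + - D i0 (y k) * \<alpha> k i0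
      \<le> - (\<Sum>i<q. \<alpha> k i * D i (y k))"
    using w_bound
  proof eventually_elim
    case (elim k)
    have "(\<Sum>i<q. \<alpha> k i * D i (y k)) = \<alpha> k i0 * D i0 (y k) + (\<Sum>i\<in>I. \<alpha> k i * D i (y k))"
      using sum.remove[of "{..<q}" i0] i0(1) by (simp add: I_def)
    also have "\<dots> \<le> \<alpha> k i0 * D i0 (y k) + (\<Sum>i\<in>I. w i k)"
      using elim by (intro add_left_mono sum_mono) auto
    finally show ?case
      by (simp add: mult.commute)
  qed
  moreover have "filterlim (\<lambda>k. - (\<Sum>i\<in>I. w i k) + - D i0 (y k) * \<alpha> k i0) at_top sequentially"
  proof (rule filterlim_tendsto_add_at_top)
    show "(\<lambda>k. - (\<Sum>i\<in>I. w i k)) \<longlonglongrightarrow> - (\<Sum>i\<in>I. 0)"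
      using w by (intro tendsto_minus tendsto_sum) auto
    show "filterlim (\<lambda>k. - D i0 (y k) * \<alpha> k i0) at_top sequentially"
      by (rule filterlim_tendsto_pos_mult_at_top[OF D_i0 \<open>- D i0 x > 0\<close> \<alpha>_i0])
  qed
  ultimately have "filterlim (\<lambda>k. - (\<Sum>i<q. \<alpha> k i * D i (y k))) at_top sequentially"
    by (rule filterlim_at_top_mono[rotated])
  moreover have "(\<lambda>k. - (\<Sum>i<q. \<alpha> k i * D i (y k))) \<longlonglongrightarrow> (\<Sum>j\<in>B. pd T x j * d j)"
    using tendsto_minus[OF AKKT_sequence_directional_limit[OF cont_T akkt, of d]]
    by (simp add: D_def)
  ultimately show False
    using not_tendsto_and_filterlim_at_infinity[OF trivial_limit_sequentially]
      filterlim_at_top_imp_at_infinity by blast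
qed

theorem AKKT_sequence_imp_KKT_point:
  assumes cont_T: "\<And>j. continuous_on UNIV (\<lambda>x. pd T x j)"
    and cont_F: "\<And>i j. i < q \<Longrightarrow> continuous_on UNIV (\<lambda>x. pd (F i) x j)"
    and akkt: "AKKT_sequence T F B q x y \<alpha>"
    and infeasible_diverge: "\<And>i. i < q \<Longrightarrow> F i x \<le> 0 \<or> filterlim (\<lambda>k. \<alpha> k i) at_top sequentially"
    and cq: "((\<forall>i<q. F i x \<le> 0) \<and> CPLD B F q x) \<or> (\<exists>d. EMFCQ_direction B F q x d)"
  shows "KKT_point T F B q x"
  using cq
proof
  assume "\<exists>d. EMFCQ_direction B F q x d"
  then obtain d where d: "EMFCQ_direction B F q x d" ..
  have "F i x \<le> 0" if "i < q" for i
    using infeasible_diverge[OF that]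
      AKKT_sequence_EMFCQ_not_tendsto_at_top[OF cont_T cont_F akkt d that] by fastforce
  then show ?thesis
    using AKKT_sequence_CPLD_imp_KKT_point[OF cont_T cont_F akkt] EMFCQ_imp_CPLD[OF d] by blast
qed (use AKKT_sequence_CPLD_imp_KKT_point[OF cont_T cont_F akkt] in blast)

section \<open>The augmented Lagrangian method\<close>

lemma has_real_derivative_pos_power2: "((\<lambda>t. (pos t)\<^sup>2) has_real_derivative 2 * pos t) (at t)"
proof -
  consider "t < 0" | "t = 0" | "t > 0"
    by linarith
  then show ?thesis
  proof cases
    case 1
    have "((\<lambda>t. 0) has_real_derivative 0) (at t)"
      by simp
    then have "((\<lambda>t. (pos t)\<^sup>2) has_real_derivative 0) (at t)"
      by (rule has_field_derivative_transform_within_open[where S = "{..<0}"])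
         (use 1 in \<open>auto simp: pos_def\<close>)
    then show ?thesis
      using 1 by (simp add: pos_def)
  next
    case 2
    have "((\<lambda>h. ((pos h)\<^sup>2 - (pos 0)\<^sup>2) / h) \<longlongrightarrow> 0) (at 0)"
    proof (rule tendsto_sandwich[of "\<lambda>h. - \<bar>h\<bar>" _ _ "\<lambda>h. \<bar>h\<bar>"])
      show "\<forall>\<^sub>F h in at 0. - \<bar>h\<bar> \<le> ((pos h)\<^sup>2 - (pos 0)\<^sup>2) / h"
        "\<forall>\<^sub>F h in at 0. ((pos h)\<^sup>2 - (pos 0)\<^sup>2) / h \<le> \<bar>h\<bar>"
        by (auto intro!: always_eventually simp: pos_def max_def power2_eq_square)
    qed (auto intro!: tendsto_eq_intros)
    then show ?thesis
      using 2 by (simp add: DERIV_def pos_def)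
  next
    case 3
    have "((\<lambda>t. t\<^sup>2) has_real_derivative 2 * t) (at t)"
      by (auto intro!: derivative_eq_intros)
    then have "((\<lambda>t. (pos t)\<^sup>2) has_real_derivative 2 * t) (at t)"
      by (rule has_field_derivative_transform_within_open[where S = "{0<..}"])
         (use 3 in \<open>auto simp: pos_def\<close>)
    then show ?thesis
      using 3 by (simp add: pos_def)
  qed
qed

lemma pos_scale: "r > 0 \<Longrightarrow> r * pos (a + b / r) = pos (b + r * a)"
  by (auto simp: pos_def max_def field_simps)

lemma C1_has_derivative: "C1 f \<Longrightarrow> (f has_derivative frechet_derivative f (at x)) (at x)"
  unfolding C1_def using frechet_derivative_works by blast

lemma C1_imp_continuous_on: "C1 f \<Longrightarrow> continuous_on UNIV f"
  unfolding C1_def by (intro differentiable_imp_continuous_on) (simp add: differentiable_on_def)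

lemma pd_La:
  assumes T: "C1 T" and G: "\<And>i. i < m \<Longrightarrow> C1 (\<lambda>x. G x i)" and \<rho>: "\<rho> > 0"
  shows "pd (\<lambda>x. La T G m x u \<rho>) x j
       = pd T x j + (\<Sum>i<m. pos (u i + \<rho> * G x i) * pd (\<lambda>x. G x i) x j)"
proof -
  define DG where "DG i = frechet_derivative (\<lambda>x. G x i) (at x)" for i
  have penalty_deriv: "((\<lambda>x. (pos (G x i + u i / \<rho>))\<^sup>2) has_derivative
      (\<lambda>h. 2 * pos (G x i + u i / \<rho>) * DG i h)) (at x)" if "i < m" for i
  proof -
    have inner: "((\<lambda>x. G x i + u i / \<rho>) has_derivative DG i) (at x)"
      using C1_has_derivative[OF G[OF that]] unfolding DG_def
      by (auto intro!: derivative_eq_intros)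
    have outer: "((\<lambda>t. (pos t)\<^sup>2) has_derivative (\<lambda>h. 2 * pos (G x i + u i / \<rho>) * h))
        (at (G x i + u i / \<rho>))"
      using has_real_derivative_pos_power2 unfolding has_field_derivative_def by simp
    from has_derivative_compose[OF inner outer] show ?thesis
      by (simp add: mult.assoc)
  qed
  have "((\<lambda>x. La T G m x u \<rho>) has_derivative (\<lambda>h. frechet_derivative T (at x) h
      + \<rho> / 2 * (\<Sum>i<m. 2 * pos (G x i + u i / \<rho>) * DG i h))) (at x)"
    unfolding La_def vnorm_power2
    by (intro has_derivative_add has_derivative_mult_right has_derivative_sum
        C1_has_derivative T penalty_deriv) auto
  then have "pd (\<lambda>x. La T G m x u \<rho>) x j
      = pd T x j + (\<Sum>i<m. (\<rho> * pos (G x i + u i / \<rho>)) * DG i (axis j 1))"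
    unfolding pd_def by (simp add: frechet_derivative_at[symmetric] sum_distrib_left mult.assoc)
  also have "\<dots> = pd T x j + (\<Sum>i<m. pos (u i + \<rho> * G x i) * pd (\<lambda>x. G x i) x j)"
    using pos_scale[OF \<rho>] by (simp add: DG_def pd_def)
  finally show ?thesis .
qed

lemma sum_lessThan_cc:
  "(\<Sum>i<m + p. (if i < m then a i else b (i - m)) * pd (\<lambda>x. cc G H m x i) y j)
    = (\<Sum>i<m. a i * pd (\<lambda>x. G x i) y j) + (\<Sum>i<p. b i * pd (\<lambda>x. H x i) y j)"
  by (simp add: sum_lessThan_add cc_def)

lemma penalty_update_pos:
  assumes upd: "\<And>k. \<rho> (Suc k) = (if P k then \<rho> k else \<gamma> * \<rho> k)"
    and \<gamma>: "(\<gamma>::real) > 1" and \<rho>0: "\<rho> 0 > 0"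
  shows "\<rho> k > 0"
  by (induction k) (use \<rho>0 \<gamma> upd in auto)

lemma penalty_update_cases:
  assumes upd: "\<And>k. \<rho> (Suc k) = (if P k then \<rho> k else \<gamma> * \<rho> k)"
    and \<gamma>: "(\<gamma>::real) > 1" and \<rho>0: "\<rho> 0 > 0"
  shows "(\<exists>K. \<forall>k\<ge>K. P k) \<or> filterlim \<rho> at_top sequentially"
proof (cases "\<exists>K. \<forall>k\<ge>K. P k")
  case not_eventually: False
  have \<rho>_pos: "\<rho> k > 0" for k
    using penalty_update_pos[OF upd \<gamma> \<rho>0] .
  have inc: "incseq \<rho>"
    using upd \<rho>_pos \<gamma> by (intro incseq_SucI) (simp add: less_imp_le)
  have grow: "\<exists>K. \<rho> 0 * \<gamma> ^ N \<le> \<rho> K" for N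
  proof (induction N)
    case (Suc N)
    then obtain K where K: "\<rho> 0 * \<gamma> ^ N \<le> \<rho> K" ..
    obtain k where k: "K \<le> k" "\<not> P k"
      using not_eventually by blast
    have "\<rho> 0 * \<gamma> ^ Suc N \<le> \<gamma> * \<rho> k"
      using K incseqD[OF inc k(1)] \<gamma> by (simp add: mult.left_commute)
    also have "\<dots> = \<rho> (Suc k)"
      using upd k(2) by simp
    finally show ?case ..
  qed auto
  have "filterlim \<rho> at_top sequentially"
    unfolding filterlim_at_top
  proof
    fix Z :: real
    obtain N where "Z / \<rho> 0 < \<gamma> ^ N"
      using real_arch_pow[OF \<gamma>] by blast
    then have "Z \<le> \<rho> 0 * \<gamma> ^ N"
      using \<rho>0 by (simp add: field_simps)
    moreover obtain K where "\<rho> 0 * \<gamma> ^ N \<le> \<rho> K"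
      using grow by blast
    ultimately show "\<forall>\<^sub>F k in sequentially. Z \<le> \<rho> k"
      unfolding eventually_sequentially using incseqD[OF inc] by (meson order_trans)
  qed
  then show ?thesis ..
qed simp

lemma eventually_contracting_tendsto_zero:
  fixes V :: "nat \<Rightarrow> real"
  assumes step: "\<And>k. k \<ge> K \<Longrightarrow> V (Suc k) \<le> \<tau> * V k"
    and \<tau>: "0 \<le> \<tau>" "\<tau> < 1" and V: "\<And>k. V k \<ge> 0"
  shows "V \<longlonglongrightarrow> 0"
proof -
  have bound: "V (n + K) \<le> \<tau> ^ n * V K" for n
  proof (induction n)
    case (Suc n)
    have "V (Suc n + K) \<le> \<tau> * V (n + K)"
      using step[of "n + K"] by simp
    also have "\<dots> \<le> \<tau> * (\<tau> ^ n * V K)"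
      using Suc \<tau>(1) by (rule mult_left_mono)
    finally show ?case
      by (simp add: mult.assoc)
  qed simp
  have "(\<lambda>n. \<tau> ^ n * V K) \<longlonglongrightarrow> 0 * V K"
    using \<tau> by (intro tendsto_mult_right LIMSEQ_power_zero) simp
  moreover have "\<forall>n. norm (V (n + K)) \<le> \<tau> ^ n * V K"
    using bound V by simp
  ultimately have "(\<lambda>n. V (n + K)) \<longlonglongrightarrow> 0"
    by (simp add: Lim_null_comparison[OF always_eventually])
  then show ?thesis
    by (rule LIMSEQ_offset)
qed

lemma min_tendsto_zero_imp_nonneg:
  fixes a b :: "nat \<Rightarrow> real"
  assumes "(\<lambda>k. min (a k) (b k)) \<longlonglongrightarrow> 0" and "a \<longlonglongrightarrow> c"
  shows "c \<ge> 0"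
  using assms by (rule LIMSEQ_le) auto

lemma min_tendsto_zero_imp_tendsto_zero:
  fixes a b :: "nat \<Rightarrow> real"
  assumes min: "(\<lambda>k. min (a k) (b k)) \<longlonglongrightarrow> 0" and a: "a \<longlonglongrightarrow> c" and c: "c > 0"
  shows "b \<longlonglongrightarrow> 0"
proof -
  have "\<forall>\<^sub>F k in sequentially. min (a k) (b k) < c / 2"
    using min c by (intro order_tendstoD(2)) auto
  moreover have "\<forall>\<^sub>F k in sequentially. a k > c / 2"
    using a c by (intro order_tendstoD(1)) auto
  ultimately have "\<forall>\<^sub>F k in sequentially. min (a k) (b k) = b k"
    by eventually_elim (auto simp: min_def)
  with min show ?thesis
    by (rule Lim_transform_eventually)
qed

lemma pos_update_eventually_zero:
  fixes u \<rho> g :: "nat \<Rightarrow> real"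
  assumes u: "\<forall>\<^sub>F k in sequentially. u k \<le> U" and \<rho>: "filterlim \<rho> at_top sequentially"
    and g: "g \<longlonglongrightarrow> c" "c < 0"
  shows "\<forall>\<^sub>F k in sequentially. pos (u k + \<rho> k * g k) = 0"
proof -
  have "filterlim (\<lambda>k. g k * \<rho> k) at_bot sequentially"
    using g \<rho> by (rule filterlim_tendsto_neg_mult_at_bot)
  then have "\<forall>\<^sub>F k in sequentially. g k * \<rho> k \<le> - U"
    by (simp add: filterlim_at_bot)
  with u show ?thesis
    by eventually_elim (simp add: pos_def mult.commute)
qed

lemma pos_update_tendsto_at_top:
  fixes u \<rho> g :: "nat \<Rightarrow> real"
  assumes u: "\<forall>\<^sub>F k in sequentially. u k \<ge> 0" and \<rho>: "filterlim \<rho> at_top sequentially"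
    and g: "g \<longlonglongrightarrow> c" "c > 0"
  shows "filterlim (\<lambda>k. pos (u k + \<rho> k * g k)) at_top sequentially"
proof (rule filterlim_at_top_mono)
  show "filterlim (\<lambda>k. g k * \<rho> k) at_top sequentially"
    using g \<rho> by (rule filterlim_tendsto_pos_mult_at_top)
  show "\<forall>\<^sub>F k in sequentially. g k * \<rho> k \<le> pos (u k + \<rho> k * g k)"
    using u by eventually_elim (simp add: pos_def mult.commute)
qed

lemma limit_point_of_successors:
  assumes r: "strict_mono r" and lim: "(xs \<circ> r) \<longlonglongrightarrow> x"
  obtains s where "strict_mono s" "(\<lambda>k. xs (Suc (s k))) \<longlonglongrightarrow> x"
proof
  define s where "s k = r (Suc k) - 1" for k
  have Suc_s: "Suc (s k) = r (Suc k)" for k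
    using seq_suble[OF r, of "Suc k"] by (simp add: s_def)
  show "strict_mono s"
    unfolding strict_mono_Suc_iff
  proof
    fix k
    have "r (Suc k) < r (Suc (Suc k))"
      using r by (simp add: strict_mono_Suc_iff)
    then show "s k < s (Suc k)"
      using Suc_s[of k] Suc_s[of "Suc k"] by simp
  qed
  show "(\<lambda>k. xs (Suc (s k))) \<longlonglongrightarrow> x"
    using LIMSEQ_Suc[OF lim] by (simp add: Suc_s)
qed

text \<open>The method as seen by one player: B is the player's block of coordinates, and the
  players interact only through the common iterates xs.\<close>

locale ALM_player =
  fixes B :: "'n::finite set" and T :: "real^'n \<Rightarrow> real" and G H :: "real^'n \<Rightarrow> nat \<Rightarrow> real"
    and m p :: nat and xs :: "nat \<Rightarrow> real^'n" and lam u mu :: "nat \<Rightarrow> nat \<Rightarrow> real"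
    and umax :: "nat \<Rightarrow> real" and \<tau> \<gamma> :: real and \<rho> \<epsilon> \<epsilon>' :: "nat \<Rightarrow> real"
  assumes C1_T: "C1 T"
    and C1_G: "\<And>i. i < m \<Longrightarrow> C1 (\<lambda>x. G x i)"
    and C1_H: "\<And>i. i < p \<Longrightarrow> C1 (\<lambda>x. H x i)"
    and umax_nonneg: "\<And>i. i < m \<Longrightarrow> umax i \<ge> 0"
    and tau: "0 < \<tau> \<and> \<tau> < 1"
    and gamma: "\<gamma> > 1"
    and rho0: "\<rho> 0 > 0"
    and inexact_stationarity: "\<And>k. vnorm B (\<lambda>j. pd (\<lambda>x. La T G m x (u k) (\<rho> k)) (xs (Suc k)) j
        + (\<Sum>i<p. mu (Suc k) i * pd (\<lambda>x. H x i) (xs (Suc k)) j)) \<le> \<epsilon> k"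
    and inexact_complementarity: "\<And>k. vnorm {..<p}
        (\<lambda>i. min (- H (xs (Suc k)) i) (mu (Suc k) i)) \<le> \<epsilon>' k"
    and eps_lim: "\<epsilon> \<longlonglongrightarrow> 0"
    and eps'_lim: "\<epsilon>' \<longlonglongrightarrow> 0"
    and lam_upd: "\<And>k i. i < m \<Longrightarrow> lam (Suc k) i = pos (u k i + \<rho> k * G (xs (Suc k)) i)"
    and rho_upd: "\<And>k. \<rho> (Suc k) =
        (if vnorm {..<m} (\<lambda>i. min (- G (xs (Suc k)) i) (lam (Suc k) i))
            \<le> \<tau> * vnorm {..<m} (\<lambda>i. min (- G (xs k) i) (lam k i))
         then \<rho> k else \<gamma> * \<rho> k)"
    and u_upd: "\<And>k i. i < m \<Longrightarrow> u (Suc k) i = min (lam (Suc k) i) (umax i)"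
begin

abbreviation constr :: "nat \<Rightarrow> real^'n \<Rightarrow> real" where
  "constr \<equiv> \<lambda>i x. cc G H m x i"

abbreviation compl_G :: "nat \<Rightarrow> real" where
  "compl_G k \<equiv> vnorm {..<m} (\<lambda>i. min (- G (xs k) i) (lam k i))"

definition multiplier :: "nat \<Rightarrow> nat \<Rightarrow> real" where
  "multiplier k i = (if i < m then lam (Suc k) i else mu (Suc k) (i - m))"

lemma constr_G: "i < m \<Longrightarrow> constr i = (\<lambda>x. G x i)"
  by (simp add: cc_def)

lemma constr_H: "\<not> i < m \<Longrightarrow> constr i = (\<lambda>x. H x (i - m))"
  by (simp add: cc_def)

lemma continuous_pd_T: "continuous_on UNIV (\<lambda>x. pd T x j)"
  using C1_T by (simp add: C1_def)

lemma continuous_pd_constr: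
  assumes "i < m + p"
  shows "continuous_on UNIV (\<lambda>x. pd (constr i) x j)"
proof (cases "i < m")
  case True
  then show ?thesis
    using C1_G[OF True] by (simp add: constr_G C1_def)
next
  case False
  then show ?thesis
    using C1_H[of "i - m"] assms by (simp add: constr_H C1_def)
qed

lemma rho_pos: "\<rho> k > 0"
  using penalty_update_pos[OF rho_upd gamma rho0] .

lemma lam_nonneg: "i < m \<Longrightarrow> lam (Suc k) i \<ge> 0"
  by (simp add: lam_upd pos_def)

lemma u_bounds: "i < m \<Longrightarrow> k \<ge> 1 \<Longrightarrow> 0 \<le> u k i \<and> u k i \<le> umax i"
  using u_upd[of i "k - 1"] lam_nonneg[of i "k - 1"] umax_nonneg[of i] by simp

lemma pd_La_iterate:
  "pd (\<lambda>x. La T G m x (u k) (\<rho> k)) y j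
    = pd T y j + (\<Sum>i<m. pos (u k i + \<rho> k * G y i) * pd (\<lambda>x. G x i) y j)"
  using C1_G by (intro pd_La C1_T rho_pos)

lemma stationarity_residual_le:
  assumes "j \<in> B"
  shows "\<bar>pd T (xs (Suc k)) j + (\<Sum>i<m + p. multiplier k i * pd (constr i) (xs (Suc k)) j)\<bar> \<le> \<epsilon> k"
proof -
  have "(\<Sum>i<m. lam (Suc k) i * pd (\<lambda>x. G x i) (xs (Suc k)) j)
      = (\<Sum>i<m. pos (u k i + \<rho> k * G (xs (Suc k)) i) * pd (\<lambda>x. G x i) (xs (Suc k)) j)"
    by (rule sum.cong) (simp_all add: lam_upd)
  then have "pd T (xs (Suc k)) j + (\<Sum>i<m + p. multiplier k i * pd (constr i) (xs (Suc k)) j)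
      = pd (\<lambda>x. La T G m x (u k) (\<rho> k)) (xs (Suc k)) j
        + (\<Sum>i<p. mu (Suc k) i * pd (\<lambda>x. H x i) (xs (Suc k)) j)"
    unfolding multiplier_def sum_lessThan_cc pd_La_iterate by simp
  moreover have "\<bar>pd (\<lambda>x. La T G m x (u k) (\<rho> k)) (xs (Suc k)) j
        + (\<Sum>i<p. mu (Suc k) i * pd (\<lambda>x. H x i) (xs (Suc k)) j)\<bar>
      \<le> vnorm B (\<lambda>j. pd (\<lambda>x. La T G m x (u k) (\<rho> k)) (xs (Suc k)) j
        + (\<Sum>i<p. mu (Suc k) i * pd (\<lambda>x. H x i) (xs (Suc k)) j))"
    by (rule abs_le_vnorm) (simp_all add: assms)
  ultimately show ?thesis
    using inexact_stationarity[of k] by simp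
qed

lemma penalty_cases:
  "(\<exists>K. \<forall>k\<ge>K. compl_G (Suc k) \<le> \<tau> * compl_G k) \<or> filterlim \<rho> at_top sequentially"
  using penalty_update_cases[OF rho_upd gamma rho0] .

lemma compl_G_tendsto_zero_if_penalty_bounded:
  assumes "\<forall>k\<ge>K. compl_G (Suc k) \<le> \<tau> * compl_G k" and "i < m"
  shows "(\<lambda>k. min (- G (xs k) i) (lam k i)) \<longlonglongrightarrow> 0"
proof -
  have "compl_G \<longlonglongrightarrow> 0"
    using assms(1) tau
    by (intro eventually_contracting_tendsto_zero[of K]) (auto simp: vnorm_def sum_nonneg)
  moreover have "\<forall>k. norm (min (- G (xs k) i) (lam k i)) \<le> compl_G k"
  proof
    fix k
    show "norm (min (- G (xs k) i) (lam k i)) \<le> compl_G k"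
      using abs_le_vnorm[of "{..<m}" i "\<lambda>i. min (- G (xs k) i) (lam k i)"] assms(2) by simp
  qed
  ultimately show ?thesis
    by (simp add: Lim_null_comparison[OF always_eventually])
qed

context
  fixes s :: "nat \<Rightarrow> nat" and x :: "real^'n"
  assumes s: "strict_mono s" and y: "(\<lambda>k. xs (Suc (s k))) \<longlonglongrightarrow> x"
begin

lemma G_tendsto: "i < m \<Longrightarrow> (\<lambda>k. G (xs (Suc (s k))) i) \<longlonglongrightarrow> G x i"
  using C1_imp_continuous_on[OF C1_G] y by (rule continuous_on_UNIV_tendsto_compose)

lemma H_tendsto: "i < p \<Longrightarrow> (\<lambda>k. H (xs (Suc (s k))) i) \<longlonglongrightarrow> H x i"
  using C1_imp_continuous_on[OF C1_H] y by (rule continuous_on_UNIV_tendsto_compose)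

lemma H_complementarity:
  assumes "i < p"
  shows "(\<lambda>k. min (- H (xs (Suc (s k))) i) (mu (Suc (s k)) i)) \<longlonglongrightarrow> 0"
proof -
  have "\<forall>k. norm (min (- H (xs (Suc (s k))) i) (mu (Suc (s k)) i)) \<le> \<epsilon>' (s k)"
  proof
    fix k
    show "norm (min (- H (xs (Suc (s k))) i) (mu (Suc (s k)) i)) \<le> \<epsilon>' (s k)"
      using abs_le_vnorm[of "{..<p}" i "\<lambda>i. min (- H (xs (Suc (s k))) i) (mu (Suc (s k)) i)"]
        inexact_complementarity[of "s k"] assms by simp
  qed
  moreover have "(\<lambda>k. \<epsilon>' (s k)) \<longlonglongrightarrow> 0"
    using LIMSEQ_subseq_LIMSEQ[OF eps'_lim s] by (simp add: o_def)
  ultimately show ?thesis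
    by (simp add: Lim_null_comparison[OF always_eventually])
qed

lemma G_multiplier_limits:
  assumes i: "i < m"
  shows "(G x i < 0 \<longrightarrow> (\<lambda>k. lam (Suc (s k)) i) \<longlonglongrightarrow> 0)
    \<and> (G x i \<le> 0 \<or> filterlim (\<lambda>k. lam (Suc (s k)) i) at_top sequentially)"
  using penalty_cases
proof
  assume "\<exists>K. \<forall>k\<ge>K. compl_G (Suc k) \<le> \<tau> * compl_G k"
  then obtain K where "\<forall>k\<ge>K. compl_G (Suc k) \<le> \<tau> * compl_G k" ..
  from LIMSEQ_subseq_LIMSEQ[OF compl_G_tendsto_zero_if_penalty_bounded[OF this i],
      of "\<lambda>k. Suc (s k)"]
  have min: "(\<lambda>k. min (- G (xs (Suc (s k))) i) (lam (Suc (s k)) i)) \<longlonglongrightarrow> 0"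
    using s by (simp add: o_def strict_mono_def)
  have G: "(\<lambda>k. - G (xs (Suc (s k))) i) \<longlonglongrightarrow> - G x i"
    using G_tendsto[OF i] by (rule tendsto_minus)
  show ?thesis
    using min_tendsto_zero_imp_nonneg[OF min G] min_tendsto_zero_imp_tendsto_zero[OF min G] by simp
next
  assume "filterlim \<rho> at_top sequentially"
  then have \<rho>: "filterlim (\<lambda>k. \<rho> (s k)) at_top sequentially"
    using filterlim_compose filterlim_subseq[OF s] by blast
  have lam_eq: "(\<lambda>k. lam (Suc (s k)) i) = (\<lambda>k. pos (u (s k) i + \<rho> (s k) * G (xs (Suc (s k))) i))"
    using lam_upd[OF i] by simp
  have u: "\<forall>\<^sub>F k in sequentially. 0 \<le> u (s k) i \<and> u (s k) i \<le> umax i"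
    using eventually_ge_at_top[of 1] 
  proof eventually_elim
    case (elim k)
    then show ?case
      using u_bounds[OF i] seq_suble[OF s, of k] by simp
  qed
  consider "G x i < 0" | "G x i = 0" | "G x i > 0"
    by linarith
  then show ?thesis
  proof cases
    case 1
    have "\<forall>\<^sub>F k in sequentially. pos (u (s k) i + \<rho> (s k) * G (xs (Suc (s k))) i) = 0"
      using u by (intro pos_update_eventually_zero[OF _ \<rho> G_tendsto[OF i] 1])
        (auto elim: eventually_mono)
    then show ?thesis
      using 1 unfolding lam_eq by (simp add: tendsto_eventually)
  next
    case 3
    have "filterlim (\<lambda>k. pos (u (s k) i + \<rho> (s k) * G (xs (Suc (s k))) i)) at_top sequentially"
      using u by (intro pos_update_tendsto_at_top[OF _ \<rho> G_tendsto[OF i] 3])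
        (auto elim: eventually_mono)
    then show ?thesis
      using 3 unfolding lam_eq by simp
  qed simp
qed

lemma multiplier_tendsto_zero_if_inactive:
  assumes i: "i < m + p" and inactive: "constr i x < 0"
  shows "(\<lambda>k. multiplier (s k) i) \<longlonglongrightarrow> 0"
proof (cases "i < m")
  case True
  then show ?thesis
    using G_multiplier_limits[OF True] inactive by (simp add: multiplier_def cc_def)
next
  case False
  then have i': "i - m < p"
    using i by simp
  have "(\<lambda>k. - H (xs (Suc (s k))) (i - m)) \<longlonglongrightarrow> - H x (i - m)"
    using H_tendsto[OF i'] by (rule tendsto_minus)
  from min_tendsto_zero_imp_tendsto_zero[OF H_complementarity[OF i'] this]
  show ?thesis
    using inactive False by (simp add: multiplier_def cc_def)
qed

lemma multiplier_negative_part_tendsto_zero: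
  assumes i: "i < m + p"
  shows "(\<lambda>k. min 0 (multiplier (s k) i)) \<longlonglongrightarrow> 0"
proof (cases "i < m")
  case True
  then show ?thesis
    using lam_nonneg by (simp add: multiplier_def)
next
  case False
  then have i': "i - m < p"
    using i by simp
  have "\<forall>k. norm (min 0 (multiplier (s k) i))
      \<le> norm (min (- H (xs (Suc (s k))) (i - m)) (mu (Suc (s k)) (i - m)))"
    using False by (auto simp: multiplier_def min_def)
  moreover have "(\<lambda>k. norm (min (- H (xs (Suc (s k))) (i - m)) (mu (Suc (s k)) (i - m)))) \<longlonglongrightarrow> 0"
    using tendsto_norm_zero[OF H_complementarity[OF i']] .
  ultimately show ?thesis
    by (simp add: Lim_null_comparison[OF always_eventually])
qed

lemma AKKT_sequence_subseq:
  "AKKT_sequence T constr B (m + p) x (\<lambda>k. xs (Suc (s k))) (\<lambda>k. multiplier (s k))"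
  unfolding AKKT_sequence_def
proof (intro conjI y ballI allI impI multiplier_tendsto_zero_if_inactive
    multiplier_negative_part_tendsto_zero)
  fix j assume "j \<in> B"
  have "\<forall>k. norm (pd T (xs (Suc (s k))) j
      + (\<Sum>i<m + p. multiplier (s k) i * pd (constr i) (xs (Suc (s k))) j)) \<le> \<epsilon> (s k)"
    using stationarity_residual_le[OF \<open>j \<in> B\<close>] by simp
  moreover have "(\<lambda>k. \<epsilon> (s k)) \<longlonglongrightarrow> 0"
    using LIMSEQ_subseq_LIMSEQ[OF eps_lim s] by (simp add: o_def)
  ultimately show "(\<lambda>k. pd T (xs (Suc (s k))) j
      + (\<Sum>i<m + p. multiplier (s k) i * pd (constr i) (xs (Suc (s k))) j)) \<longlonglongrightarrow> 0"
    by (simp add: Lim_null_comparison[OF always_eventually])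
qed

lemma limit_point_KKT:
  assumes "((\<forall>i<m + p. constr i x \<le> 0) \<and> CPLD B constr (m + p) x)
    \<or> (\<exists>d. EMFCQ_direction B constr (m + p) x d)"
  shows "KKT_point T constr B (m + p) x"
proof (rule AKKT_sequence_imp_KKT_point[OF continuous_pd_T continuous_pd_constr
      AKKT_sequence_subseq _ assms])
  fix i assume "i < m + p"
  show "constr i x \<le> 0 \<or> filterlim (\<lambda>k. multiplier (s k) i) at_top sequentially"
  proof (cases "i < m")
    case True
    then show ?thesis
      using G_multiplier_limits[OF True] by (simp add: multiplier_def cc_def)
  next
    case False
    then have i': "i - m < p"
      using \<open>i < m + p\<close> by simp
    have "(\<lambda>k. - H (xs (Suc (s k))) (i - m)) \<longlonglongrightarrow> - H x (i - m)"
      using H_tendsto[OF i'] by (rule tendsto_minus)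
    from min_tendsto_zero_imp_nonneg[OF H_complementarity[OF i'] this]
    show ?thesis
      using False by (simp add: cc_def)
  qed
qed

end

end

theorem theorem4p6:
  fixes blk :: "'n::finite \<Rightarrow> 'p::finite"
    and \<theta> :: "'p \<Rightarrow> real^'n \<Rightarrow> real"
    and g h :: "'p \<Rightarrow> real^'n \<Rightarrow> nat \<Rightarrow> real"
    and m p :: "'p \<Rightarrow> nat"
    and xs :: "nat \<Rightarrow> real^'n"
    and lam u :: "nat \<Rightarrow> 'p \<Rightarrow> nat \<Rightarrow> real"
    and mu :: "nat \<Rightarrow> 'p \<Rightarrow> nat \<Rightarrow> real"
    and umax :: "'p \<Rightarrow> nat \<Rightarrow> real"
    and \<tau> \<gamma> :: "'p \<Rightarrow> real"
    and \<rho> :: "nat \<Rightarrow> 'p \<Rightarrow> real"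
    and \<epsilon> \<epsilon>' :: "nat \<Rightarrow> real"
    and xbar :: "real^'n"
  assumes C1_theta: "\<And>\<nu>. C1 (\<theta> \<nu>)"
    and C1_g: "\<And>\<nu> i. i < m \<nu> \<Longrightarrow> C1 (\<lambda>x. g \<nu> x i)"
    and C1_h: "\<And>\<nu> i. i < p \<nu> \<Longrightarrow> C1 (\<lambda>x. h \<nu> x i)"
    and umax_nonneg: "\<And>\<nu> i. i < m \<nu> \<Longrightarrow> umax \<nu> i \<ge> 0"
    and tau: "\<And>\<nu>. 0 < \<tau> \<nu> \<and> \<tau> \<nu> < 1"
    and gamma: "\<And>\<nu>. \<gamma> \<nu> > 1"
    and rho0: "\<And>\<nu>. \<rho> 0 \<nu> > 0"
    and inexact1: "\<And>k \<nu>. vnorm {j. blk j = \<nu>}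
        (\<lambda>j. pd (\<lambda>x. La (\<theta> \<nu>) (g \<nu>) (m \<nu>) x (u k \<nu>) (\<rho> k \<nu>)) (xs (Suc k)) j
             + (\<Sum>i<p \<nu>. mu (Suc k) \<nu> i * pd (\<lambda>x. h \<nu> x i) (xs (Suc k)) j)) \<le> \<epsilon> k"
    and inexact2: "\<And>k \<nu>. vnorm {..<p \<nu>}
        (\<lambda>i. min (- h \<nu> (xs (Suc k)) i) (mu (Suc k) \<nu> i)) \<le> \<epsilon>' k"
    and eps_nonneg: "\<And>k. \<epsilon> k \<ge> 0"
    and eps_dec: "decseq \<epsilon>"
    and eps_lim: "\<epsilon> \<longlonglongrightarrow> 0"
    and eps'_lim: "\<epsilon>' \<longlonglongrightarrow> 0"
    and lam_upd: "\<And>k \<nu> i. i < m \<nu> \<Longrightarrow>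
        lam (Suc k) \<nu> i = pos (u k \<nu> i + \<rho> k \<nu> * g \<nu> (xs (Suc k)) i)"
    and rho_upd: "\<And>k \<nu>. \<rho> (Suc k) \<nu> =
        (if vnorm {..<m \<nu>} (\<lambda>i. min (- g \<nu> (xs (Suc k)) i) (lam (Suc k) \<nu> i))
            \<le> \<tau> \<nu> * vnorm {..<m \<nu>} (\<lambda>i. min (- g \<nu> (xs k) i) (lam k \<nu> i))
         then \<rho> k \<nu> else \<gamma> \<nu> * \<rho> k \<nu>)"
    and u_upd: "\<And>k \<nu> i. i < m \<nu> \<Longrightarrow> u (Suc k) \<nu> i = min (lam (Suc k) \<nu> i) (umax \<nu> i)"
    and limpt: "\<exists>r. strict_mono r \<and> (xs \<circ> r) \<longlonglongrightarrow> xbar"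
    and cq: "((\<forall>\<nu> i. i < m \<nu> + p \<nu> \<longrightarrow> cc (g \<nu>) (h \<nu>) (m \<nu>) xbar i \<le> 0) \<and>
              (\<forall>\<nu>. CPLD {j. blk j = \<nu>} (\<lambda>i x. cc (g \<nu>) (h \<nu>) (m \<nu>) x i) (m \<nu> + p \<nu>) xbar))
          \<or> (\<forall>\<nu>. \<exists>d :: 'n \<Rightarrow> real. \<forall>i < m \<nu> + p \<nu>. cc (g \<nu>) (h \<nu>) (m \<nu>) xbar i \<ge> 0 \<longrightarrow>
                 (\<Sum>j\<in>{j. blk j = \<nu>}. pd (\<lambda>x. cc (g \<nu>) (h \<nu>) (m \<nu>) x i) xbar j * d j) < 0)"
  shows "\<exists>mult :: 'p \<Rightarrow> nat \<Rightarrow> real. \<forall>\<nu>.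
           (\<forall>j. blk j = \<nu> \<longrightarrow> pd (\<theta> \<nu>) xbar j
               + (\<Sum>i < m \<nu> + p \<nu>. mult \<nu> i * pd (\<lambda>x. cc (g \<nu>) (h \<nu>) (m \<nu>) x i) xbar j) = 0)
         \<and> (\<forall>i < m \<nu> + p \<nu>. min (- cc (g \<nu>) (h \<nu>) (m \<nu>) xbar i) (mult \<nu> i) = 0)"
proof -
  obtain s where s: "strict_mono s" and y: "(\<lambda>k. xs (Suc (s k))) \<longlonglongrightarrow> xbar"
    using limpt limit_point_of_successors by blast
  have "KKT_point (\<theta> \<nu>) (\<lambda>i x. cc (g \<nu>) (h \<nu>) (m \<nu>) x i) {j. blk j = \<nu>} (m \<nu> + p \<nu>) xbar" for \<nu>
  proof -
    interpret ALM_player "{j. blk j = \<nu>}" "\<theta> \<nu>" "g \<nu>" "h \<nu>" "m \<nu>" "p \<nu>" xs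
      "\<lambda>k. lam k \<nu>" "\<lambda>k. u k \<nu>" "\<lambda>k. mu k \<nu>" "umax \<nu>" "\<tau> \<nu>" "\<gamma> \<nu>" "\<lambda>k. \<rho> k \<nu>" \<epsilon> \<epsilon>'
      using C1_theta C1_g C1_h umax_nonneg tau gamma rho0 inexact1 inexact2 eps_lim eps'_lim
        lam_upd rho_upd u_upd by unfold_locales
    have "((\<forall>i<m \<nu> + p \<nu>. constr i xbar \<le> 0) \<and> CPLD {j. blk j = \<nu>} constr (m \<nu> + p \<nu>) xbar)
        \<or> (\<exists>d. EMFCQ_direction {j. blk j = \<nu>} constr (m \<nu> + p \<nu>) xbar d)"
      using cq unfolding EMFCQ_direction_def by blast
    then show ?thesis
      by (rule limit_point_KKT[OF s y])
  qed
  then have "\<forall>\<nu>. \<exists>mult. (\<forall>j\<in>{j. blk j = \<nu>}. pd (\<theta> \<nu>) xbar j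
        + (\<Sum>i<m \<nu> + p \<nu>. mult i * pd (\<lambda>x. cc (g \<nu>) (h \<nu>) (m \<nu>) x i) xbar j) = 0)
      \<and> (\<forall>i<m \<nu> + p \<nu>. min (- cc (g \<nu>) (h \<nu>) (m \<nu>) xbar i) (mult i) = 0)"
    unfolding KKT_point_def by blast
  then show ?thesis
    unfolding choice_iff by simp
qed

end
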